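(* For $1\le i\le r$, $C_{i,r}=G_{i,r-i+2}$.
   Context: Bernoulli numbers $B_n$: $\sum_{n\ge0}B_n x^n/n! = xe^x/(e^x-1)$. For $1\le i\le r$, $C_{i,r}=(-1)^r\sum\prod_{j=1}^rB_{n_j}/n_j!$, the sum over $(n_1,\dots,n_r)\in\mathbb Z_{\ge0}^r$ with $n_1+\dots+n_r=r$, $n_1+\dots+n_j<j$ ($1\le j<i$), and $n_{j+1}+\dots+n_r\le r-j$ ($i\le j<r$). (These are the coefficients of $(\epsilon_i+\dots+\epsilon_r)/(\epsilon_1+\dots+\epsilon_r)$-type terms in the asymptotic expansion of the Euler–Zagier multiple zeta function $\zeta(\epsilon_1,\dots,\epsilon_r)$ at the origin.) The generalized Gregory coefficients $G_{m,n}\in\mathbb Q$ ($m,n\ge0$) are defined by the formal power series identity \[ \sum_{m,n\ge0}G_{m,n}x^my^n=\frac{y\log^2(1+x)-x\log^2(1+y)}{\log(1+x)-\log(1+y)}, \] where $\log^k u=(\log u)^k$. *)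

theory Defs
  imports "HOL-Computational_Algebra.Formal_Power_Series"
begin

text \<open>Bernoulli numbers with generating function x e^x/(e^x - 1), i.e. B_1 = 1/2.
  The generating series is the unique formal power series f with
  f * (e^x - 1) = x e^x (unique since rat fps is an integral domain).\<close>
definition bernoulli_fps :: "rat fps" where
  "bernoulli_fps = (THE f. f * (fps_exp 1 - 1) = fps_X * fps_exp 1)"

definition bernoulli :: "nat \<Rightarrow> rat" where
  "bernoulli n = fact n * fps_nth bernoulli_fps n"

text \<open>C_{i,r}: tuples (n_1,...,n_r) are lists ns of length r, n_j = ns ! (j-1).\<close>
definition C_tuples :: "nat \<Rightarrow> nat \<Rightarrow> nat list set" where
  "C_tuples i r = {ns. length ns = r \<and> sum_list ns = r
      \<and> (\<forall>j. 1 \<le> j \<and> j < i \<longrightarrow> (\<Sum>k=1..j. ns ! (k - 1)) < j)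
      \<and> (\<forall>j. i \<le> j \<and> j < r \<longrightarrow> (\<Sum>k=j+1..r. ns ! (k - 1)) \<le> r - j)}"

definition C_coeff :: "nat \<Rightarrow> nat \<Rightarrow> rat" where
  "C_coeff i r = (-1) ^ r * (\<Sum>ns\<in>C_tuples i r.
      \<Prod>j=1..r. bernoulli (ns ! (j - 1)) / fact (ns ! (j - 1)))"

definition log1p_fps :: "rat fps" where
  "log1p_fps = Abs_fps (\<lambda>n. if n = 0 then 0 else (-1) ^ (n + 1) / of_nat n)"

text \<open>Bivariate power series in x, y as rat fps fps: the outer variable is y,
  the inner (coefficient) variable is x.  Coefficient of x^m y^n of F is
  fps_nth (fps_nth F n) m.\<close>
definition bvX :: "rat fps fps" where "bvX = fps_const fps_X"
definition bvY :: "rat fps fps" where "bvY = fps_X"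
definition bvLx :: "rat fps fps" where "bvLx = fps_const log1p_fps"
definition bvLy :: "rat fps fps" where
  "bvLy = Abs_fps (\<lambda>n. fps_const (fps_nth log1p_fps n))"

definition gregory_fps :: "rat fps fps" where
  "gregory_fps = (THE g. (bvLx - bvLy) * g = bvY * bvLx ^ 2 - bvX * bvLy ^ 2)"

definition G :: "nat \<Rightarrow> nat \<Rightarrow> rat" where
  "G m n = fps_nth (fps_nth gregory_fps n) m"

end

theory Submission
  imports Defs
begin

unbundle fps_syntax

text \<open>
  Let B(t) = \<Sum>_n b_n t^n with b_n = B_n / n!, N = -log(1 + x) and A(m, k) = [x^m] N^k.
  Substituting t = N into B(t) (e^t - 1) = t e^t gives x B(N) = -N, that is, the recursion
  A(m + 1, k + 1) = - \<Sum>_n b_n A(m, k + n). Unfolding it, (-1)^m A(m, k) is the sum of the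
  weights b_{n_1} ... b_{n_m} over the Lukasiewicz paths of length m started at height k.
  Cut at position i, a tuple counted by C_{i,r} consists of a reversed prefix and a suffix which
  are such paths, whence C_{i,r} = \<Sum>_{k,j} b_{k+j} A(i - 1, k) A(r - i + 1, j).

  On the other side, with a = N(x) and c = N(y) the equation defining the Gregory series reads
  (c - a) g = y a^2 - x c^2. Since x B(a) = -a and y B(c) = -c, it is solved by
  g = -y a + x y \<Phi>(c), where \<Phi>(z) = z (B(z) - B(a)) / (z - a) = \<Sum>_j z^j \<Sum>_t b_{t+j} a^t;
  the coefficients of g are therefore the same double sum.
\<close>

section \<open>Bernoulli numbers and the logarithm\<close>

lemma fps_exp_one_minus_one:
  "fps_exp 1 - 1 = fps_X * fps_shift 1 (fps_exp (1::'a::field_char_0))"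
proof (rule fps_ext)
  fix n show "(fps_exp 1 - 1) $ n = (fps_X * fps_shift 1 (fps_exp (1::'a))) $ n"
    by (cases n) simp_all
qed

lemma bernoulli_fps_times_exp_minus_one: "bernoulli_fps * (fps_exp 1 - 1) = fps_X * fps_exp 1"
  and bernoulli_fps_nth_0 [simp]: "bernoulli_fps $ 0 = 1"
proof -
  let ?E = "fps_shift 1 (fps_exp (1::rat))"
  let ?B = "fps_exp 1 * inverse ?E"
  have "inverse ?E * ?E = 1"
    by (simp add: inverse_mult_eq_1)
  then have sol: "?B * (fps_exp 1 - 1) = fps_X * fps_exp 1"
    by (simp add: fps_exp_one_minus_one ac_simps)
  have "fps_exp 1 - 1 \<noteq> (0::rat fps)"
    by (auto simp: fps_eq_iff intro!: exI[of _ 1])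
  then have "f = ?B" if "f * (fps_exp 1 - 1) = fps_X * fps_exp 1" for f
    using that sol mult_right_cancel by metis
  with sol have eq: "bernoulli_fps = ?B"
    unfolding bernoulli_fps_def by (intro the_equality)
  from sol show "bernoulli_fps * (fps_exp 1 - 1) = fps_X * fps_exp 1"
    unfolding eq .
  show "bernoulli_fps $ 0 = 1"
    unfolding eq by simp
qed

lemma log1p_fps_eq_fps_ln: "log1p_fps = fps_ln 1"
proof (rule fps_ext)
  fix n show "log1p_fps $ n = fps_ln 1 $ n"
    by (cases n) (simp_all add: log1p_fps_def fps_ln_nth)
qed

lemma fps_exp_compose_log1p: "fps_exp 1 oo log1p_fps = 1 + fps_X"
proof -
  have "(fps_exp 1 - 1) oo fps_inv (fps_exp 1 - 1) = (fps_X :: rat fps)"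
    by (rule fps_inv_right) simp_all
  then have "(fps_exp 1 oo log1p_fps) - 1 = fps_X"
    by (simp add: log1p_fps_eq_fps_ln fps_ln_fps_exp_inv[symmetric] fps_compose_sub_distrib)
  then show ?thesis
    by (simp add: algebra_simps)
qed

lemma log1p_fps_nth_0 [simp]: "log1p_fps $ 0 = 0"
  by (simp add: log1p_fps_def)

definition neg_log1p_fps :: "rat fps" where
  "neg_log1p_fps = - log1p_fps"

lemma neg_log1p_fps_nth_0 [simp]: "neg_log1p_fps $ 0 = 0"
  by (simp add: neg_log1p_fps_def)

lemma fps_exp_compose_neg_log1p: "(fps_exp 1 oo neg_log1p_fps) * (1 + fps_X) = 1"
proof -
  have "neg_log1p_fps = - fps_X oo log1p_fps"
    by (simp add: neg_log1p_fps_def fps_compose_uminus)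
  then have "fps_exp 1 oo neg_log1p_fps = (fps_exp 1 oo - fps_X) oo log1p_fps"
    using fps_compose_assoc[of log1p_fps "- fps_X" "fps_exp 1"] by simp
  also have "\<dots> = inverse (fps_exp 1) oo log1p_fps"
    by (simp add: fps_exp_neg)
  also have "\<dots> = inverse (1 + fps_X)"
    by (simp add: fps_inverse_compose fps_exp_compose_log1p)
  finally show ?thesis
    by (simp add: inverse_mult_eq_1)
qed

lemma bernoulli_fps_compose_neg_log1p:
  "fps_X * (bernoulli_fps oo neg_log1p_fps) = - neg_log1p_fps"
proof -
  let ?B = "bernoulli_fps oo neg_log1p_fps" and ?E = "fps_exp 1 oo neg_log1p_fps"
  have h: "?B * (?E - 1) = neg_log1p_fps * ?E"
    using arg_cong[OF bernoulli_fps_times_exp_minus_one, of "\<lambda>f. f oo neg_log1p_fps"]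
    by (simp add: fps_compose_mult_distrib fps_compose_sub_distrib)
  then have "?B * (?E * (1 + fps_X) - (1 + fps_X)) = neg_log1p_fps * (?E * (1 + fps_X))"
    by (metis (no_types) mult.assoc left_diff_distrib' mult_1_left)
  then have "?B * (1 - (1 + fps_X)) = neg_log1p_fps"
    by (simp only: fps_exp_compose_neg_log1p mult_1_right)
  then show ?thesis
    by (simp add: algebra_simps minus_equation_iff)
qed

lemma fps_power_nth_eq_0:
  fixes f :: "'a::comm_semiring_1 fps"
  assumes "f $ 0 = 0" and "k < n"
  shows "(f ^ n) $ k = 0"
  using assms(2)
proof (induction n arbitrary: k)
  case (Suc n)
  have "f $ i * (f ^ n) $ (k - i) = 0" if "i \<le> k" for i
    using Suc that assms(1) by (cases i) simp_all
  then show ?case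
    by (simp add: fps_mult_nth)
qed simp

lemma fps_mult_compose_nth:
  fixes f g h :: "'a::comm_semiring_1 fps"
  assumes "g $ 0 = 0"
  shows "(h * (f oo g)) $ m = (\<Sum>n=0..m. f $ n * (h * g ^ n) $ m)"
proof -
  have trunc: "(\<Sum>n=0..m-a. f $ n * (g ^ n) $ (m - a)) = (\<Sum>n=0..m. f $ n * (g ^ n) $ (m - a))"
    for a by (rule sum.mono_neutral_left) (auto simp: fps_power_nth_eq_0[OF assms])
  have "(h * (f oo g)) $ m = (\<Sum>a=0..m. h $ a * (\<Sum>n=0..m. f $ n * (g ^ n) $ (m - a)))"
    by (simp add: fps_mult_nth fps_compose_nth trunc)
  also have "\<dots> = (\<Sum>n=0..m. \<Sum>a=0..m. f $ n * (h $ a * (g ^ n) $ (m - a)))"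
    by (subst sum.swap) (simp add: sum_distrib_left mult_ac)
  also have "\<dots> = (\<Sum>n=0..m. f $ n * (h * g ^ n) $ m)"
    by (simp add: fps_mult_nth sum_distrib_left)
  finally show ?thesis .
qed

lemma neg_log1p_power_Suc_nth_Suc:
  "(neg_log1p_fps ^ Suc k) $ Suc m =
     - (\<Sum>n=0..m. bernoulli_fps $ n * (neg_log1p_fps ^ (k + n)) $ m)"
proof -
  have "neg_log1p_fps ^ Suc k = - (fps_X * (bernoulli_fps oo neg_log1p_fps)) * neg_log1p_fps ^ k"
    by (simp add: bernoulli_fps_compose_neg_log1p)
  also have "\<dots> = - (fps_X * (neg_log1p_fps ^ k * (bernoulli_fps oo neg_log1p_fps)))"
    by (simp add: mult_ac)
  finally show ?thesis
    by (simp add: fps_mult_compose_nth power_add)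
qed

section \<open>Lukasiewicz paths\<close>

text \<open>A list \<open>ns\<close> encodes the path with steps \<open>n - 1\<close> started at height \<open>k\<close>: its height
  \<open>k + sum_list (take j ns) - j\<close> stays positive before step \<open>m\<close> and is \<open>0\<close> after it.\<close>
definition lukasiewicz_paths :: "nat \<Rightarrow> nat \<Rightarrow> nat list set" where
  "lukasiewicz_paths m k =
     {ns. length ns = m \<and> sum_list ns + k = m \<and> (\<forall>j<m. j < sum_list (take j ns) + k)}"

definition bernoulli_weight :: "nat list \<Rightarrow> rat" where
  "bernoulli_weight ns = (\<Prod>n\<leftarrow>ns. bernoulli_fps $ n)"

lemma bernoulli_weight_Nil [simp]: "bernoulli_weight [] = 1"
  and bernoulli_weight_Cons [simp]: "bernoulli_weight (n # ns) = bernoulli_fps $ n * bernoulli_weight ns"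
  and bernoulli_weight_append [simp]: "bernoulli_weight (xs @ ys) = bernoulli_weight xs * bernoulli_weight ys"
  and bernoulli_weight_rev [simp]: "bernoulli_weight (rev ns) = bernoulli_weight ns"
  by (simp_all add: bernoulli_weight_def rev_map[symmetric])

lemma finite_lukasiewicz_paths: "finite (lukasiewicz_paths m k)"
proof (rule finite_subset)
  show "lukasiewicz_paths m k \<subseteq> {ns. set ns \<subseteq> {..m} \<and> length ns = m}"
    using member_le_sum_list by (fastforce simp: lukasiewicz_paths_def)
qed (simp add: finite_lists_length_eq)

lemma lukasiewicz_paths_0: "lukasiewicz_paths 0 k = (if k = 0 then {[]} else {})"
  by (auto simp: lukasiewicz_paths_def)

lemma lukasiewicz_paths_Suc_0: "lukasiewicz_paths (Suc m) 0 = {}"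
  by (auto simp: lukasiewicz_paths_def)

lemma lukasiewicz_paths_Suc:
  assumes "0 < k"
  shows "lukasiewicz_paths (Suc m) k =
           (\<lambda>(n, ns). n # ns) ` (SIGMA n:{0..m}. lukasiewicz_paths m (k - 1 + n))"
proof (intro equalityI subsetI)
  fix ns assume ns: "ns \<in> lukasiewicz_paths (Suc m) k"
  then obtain n ts where ns_eq: "ns = n # ts"
    by (cases ns) (auto simp: lukasiewicz_paths_def)
  have "j < sum_list (take j ts) + (k - 1 + n)" if "j < m" for j
    using ns that assms by (auto simp: lukasiewicz_paths_def ns_eq dest!: spec[of _ "Suc j"])
  with ns assms have "n \<le> m" "ts \<in> lukasiewicz_paths m (k - 1 + n)"
    by (auto simp: lukasiewicz_paths_def ns_eq)
  then show "ns \<in> (\<lambda>(n, ns). n # ns) ` (SIGMA n:{0..m}. lukasiewicz_paths m (k - 1 + n))"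
    by (auto simp: ns_eq)
next
  fix ns assume "ns \<in> (\<lambda>(n, ns). n # ns) ` (SIGMA n:{0..m}. lukasiewicz_paths m (k - 1 + n))"
  then obtain n ts where ns_eq: "ns = n # ts" and ts: "ts \<in> lukasiewicz_paths m (k - 1 + n)"
    by auto
  have "j < sum_list (take j ns) + k" if "j < Suc m" for j
    using ts assms that by (cases j) (auto simp: lukasiewicz_paths_def ns_eq)
  with ts assms show "ns \<in> lukasiewicz_paths (Suc m) k"
    by (auto simp: lukasiewicz_paths_def ns_eq)
qed

lemma sum_bernoulli_weight_lukasiewicz_paths:
  "(\<Sum>ns\<in>lukasiewicz_paths m k. bernoulli_weight ns) = (-1) ^ m * (neg_log1p_fps ^ k) $ m"
proof (induction m arbitrary: k)
  case 0
  then show ?case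
    by (simp add: lukasiewicz_paths_0)
next
  case (Suc m)
  show ?case
  proof (cases k)
    case 0
    then show ?thesis
      by (simp add: lukasiewicz_paths_Suc_0)
  next
    case (Suc k')
    have "inj_on (\<lambda>(n, ns). n # ns) (SIGMA n:{0..m}. lukasiewicz_paths m (k - 1 + n))"
      by (auto simp: inj_on_def)
    then have "(\<Sum>ns\<in>lukasiewicz_paths (Suc m) k. bernoulli_weight ns) =
        (\<Sum>n=0..m. bernoulli_fps $ n * (\<Sum>ns\<in>lukasiewicz_paths m (k' + n). bernoulli_weight ns))"
      by (simp add: lukasiewicz_paths_Suc Suc sum.reindex sum.Sigma finite_lukasiewicz_paths
          split_def sum_distrib_left)
    also have "\<dots> = (-1) ^ Suc m * (neg_log1p_fps ^ Suc k') $ Suc m"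
      unfolding neg_log1p_power_Suc_nth_Suc by (simp add: Suc.IH sum_distrib_left mult_ac sum_negf)
    finally show ?thesis
      by (simp only: Suc)
  qed
qed

lemma lukasiewicz_path_last:
  assumes "ns \<in> lukasiewicz_paths (Suc q) k" and "0 < k"
  shows "ns = butlast ns @ [0]"
proof -
  from assms(1) have len: "length ns = Suc q" and sum: "sum_list ns + k = Suc q"
    and height: "q < sum_list (take q ns) + k"
    by (auto simp: lukasiewicz_paths_def)
  have split: "ns = butlast ns @ [last ns]"
    using len by (metis append_butlast_last_id list.size(3) nat.distinct(1))
  then have "sum_list ns = sum_list (take q ns) + last ns"
    using len by (metis butlast_conv_take diff_Suc_1 sum_list_append sum_list.Cons sum_list.Nil add_0_right)
  with sum height have "last ns = 0"
    by linarith
  with split show ?thesis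
    by simp
qed

section \<open>The tuples defining C_{i,r}\<close>

lemma sum_nth_atLeast1_conv_sum_list_take:
  fixes ns :: "'a::comm_monoid_add list"
  assumes "j \<le> length ns"
  shows "(\<Sum>k=1..j. ns ! (k - 1)) = sum_list (take j ns)"
  using assms by (simp add: sum.atLeast1_atMost_eq sum_list_sum_nth atLeast0LessThan)

lemma sum_nth_atLeast_Suc_conv_sum_list_drop:
  fixes ns :: "'a::cancel_comm_monoid_add list"
  assumes "j \<le> length ns"
  shows "(\<Sum>k=j+1..length ns. ns ! (k - 1)) = sum_list (drop j ns)"
proof -
  have "(\<Sum>k=1..j + (length ns - j). ns ! (k - 1)) =
        (\<Sum>k=1..j. ns ! (k - 1)) + (\<Sum>k=j+1..j + (length ns - j). ns ! (k - 1))"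
    by (rule sum.ub_add_nat) simp
  then have "sum_list ns = sum_list (take j ns) + (\<Sum>k=j+1..length ns. ns ! (k - 1))"
    using assms sum_nth_atLeast1_conv_sum_list_take[of j ns]
      sum_nth_atLeast1_conv_sum_list_take[of "length ns" ns] by simp
  moreover have "sum_list ns = sum_list (take j ns) + sum_list (drop j ns)"
    by (metis append_take_drop_id sum_list_append)
  ultimately show ?thesis
    by simp
qed

lemma C_tuples_conv_sum_list_take:
  assumes "i \<le> r"
  shows "C_tuples i r = {ns. length ns = r \<and> sum_list ns = r
      \<and> (\<forall>j. 1 \<le> j \<and> j < i \<longrightarrow> sum_list (take j ns) < j)
      \<and> (\<forall>j. i \<le> j \<and> j < r \<longrightarrow> j \<le> sum_list (take j ns))}"
  unfolding C_tuples_def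
proof (intro Collect_cong conj_cong refl)
  fix ns :: "nat list"
  assume len: "length ns = r" and sum: "sum_list ns = r"
  show "(\<forall>j. 1 \<le> j \<and> j < i \<longrightarrow> (\<Sum>k=1..j. ns ! (k - 1)) < j) \<longleftrightarrow>
        (\<forall>j. 1 \<le> j \<and> j < i \<longrightarrow> sum_list (take j ns) < j)"
    using assms len sum_nth_atLeast1_conv_sum_list_take[of _ ns] by (metis order.strict_trans2 less_imp_le)
  have "(\<Sum>k=j+1..r. ns ! (k - 1)) \<le> r - j \<longleftrightarrow> j \<le> sum_list (take j ns)" if "j < r" for j
  proof -
    have "sum_list (take j ns) + sum_list (drop j ns) = r"
      using sum by (metis append_take_drop_id sum_list_append)
    moreover have "(\<Sum>k=j+1..r. ns ! (k - 1)) = sum_list (drop j ns)"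
      using len that sum_nth_atLeast_Suc_conv_sum_list_drop[of j ns] by simp
    ultimately show ?thesis
      using that by linarith
  qed
  then show "(\<forall>j. i \<le> j \<and> j < r \<longrightarrow> (\<Sum>k=j+1..r. ns ! (k - 1)) \<le> r - j) \<longleftrightarrow>
        (\<forall>j. i \<le> j \<and> j < r \<longrightarrow> j \<le> sum_list (take j ns))"
    by blast
qed

lemma sum_list_take_rev:
  fixes xs :: "'a::cancel_comm_monoid_add list"
  assumes "j \<le> length xs"
  shows "sum_list (take j (rev xs)) + sum_list (take (length xs - j) xs) = sum_list xs"
  using assms by (simp add: take_rev) (metis add.commute append_take_drop_id sum_list_append)

lemma C_tuples_split:
  assumes ns: "ns \<in> C_tuples (Suc p) (Suc (p + q))"
  defines "k \<equiv> p - sum_list (take p ns)" and "n \<equiv> ns ! p"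
  shows "k < n" and "n \<le> Suc (p + q)"
    and "rev (take p ns) \<in> lukasiewicz_paths p k"
    and "drop (Suc p) ns @ [0] \<in> lukasiewicz_paths (Suc q) (n - k)"
proof -
  let ?r = "Suc (p + q)" and ?S = "sum_list (take p ns)" and ?c = "drop (Suc p) ns"
  have len: "length ns = ?r" and tot: "sum_list ns = ?r"
    and prefix: "\<And>j. 1 \<le> j \<Longrightarrow> j \<le> p \<Longrightarrow> sum_list (take j ns) < j"
    and suffix: "\<And>j. Suc p \<le> j \<Longrightarrow> j < ?r \<Longrightarrow> j \<le> sum_list (take j ns)"
    using ns by (auto simp: C_tuples_conv_sum_list_take)
  have ns_eq: "ns = take p ns @ n # ?c"
    using len by (simp add: n_def id_take_nth_drop)
  have take_Suc: "take (Suc p + t) ns = take p ns @ n # take t ?c" for t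
    using len by (subst ns_eq) (simp add: min_def)
  have total: "?S + n + sum_list ?c = ?r"
    using tot ns_eq by (metis add.assoc sum_list.Cons sum_list_append)
  have S_le: "?S \<le> p"
    using prefix[of p] by (cases p) auto
  have "p < ?S + n"
  proof (cases q)
    case 0
    then show ?thesis using total len by simp
  next
    case (Suc q')
    then show ?thesis using suffix[of "Suc p"] take_Suc[of 0] by simp
  qed
  then show "k < n"
    using S_le by (simp add: k_def less_diff_conv2)
  show "n \<le> ?r"
    using total by simp
  show "rev (take p ns) \<in> lukasiewicz_paths p k"
    unfolding lukasiewicz_paths_def
  proof (intro CollectI conjI allI impI)
    fix j assume "j < p"
    then have "sum_list (take (p - j) ns) < p - j"
      using prefix[of "p - j"] by simp
    then show "j < sum_list (take j (rev (take p ns))) + k"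
      using sum_list_take_rev[of j "take p ns"] \<open>j < p\<close> len S_le by (simp add: k_def min_def)
  qed (use len S_le in \<open>simp_all add: k_def\<close>)
  show "?c @ [0] \<in> lukasiewicz_paths (Suc q) (n - k)"
    unfolding lukasiewicz_paths_def
  proof (intro CollectI conjI allI impI)
    fix t assume "t < Suc q"
    then consider "t = q" | "t < q" by linarith
    then show "t < sum_list (take t (?c @ [0])) + (n - k)"
    proof cases
      case 1
      then show ?thesis using len total S_le \<open>p < ?S + n\<close> by (simp add: k_def)
    next
      case 2
      then show ?thesis
        using suffix[of "Suc p + t"] take_Suc[of t] len S_le \<open>p < ?S + n\<close> by (simp add: k_def)
    qed
  qed (use len total S_le \<open>p < ?S + n\<close> in \<open>simp_all add: k_def\<close>)
qed

lemma C_tuples_join: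
  assumes "k < n" and "n \<le> Suc (p + q)"
    and a: "a \<in> lukasiewicz_paths p k" and c: "c \<in> lukasiewicz_paths (Suc q) (n - k)"
  shows "rev a @ n # butlast c \<in> C_tuples (Suc p) (Suc (p + q))"
proof -
  have len_a: "length a = p" and sum_a: "sum_list a + k = p"
    and height_a: "\<And>j. j < p \<Longrightarrow> j < sum_list (take j a) + k"
    using a by (auto simp: lukasiewicz_paths_def)
  have len_c: "length c = Suc q" and sum_c: "sum_list c + (n - k) = Suc q"
    and height_c: "\<And>t. t < Suc q \<Longrightarrow> t < sum_list (take t c) + (n - k)"
    using c by (auto simp: lukasiewicz_paths_def)
  have c_eq: "c = butlast c @ [0]"
    using lukasiewicz_path_last[OF c] \<open>k < n\<close> by simp
  then have sum_butlast: "sum_list (butlast c) = sum_list c"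
    by (metis add_0_right sum_list.Cons sum_list.Nil sum_list_append)
  have take_butlast: "take t (butlast c) = take t c" if "t < q" for t
    using that len_c by (simp add: butlast_conv_take)
  show ?thesis
    unfolding C_tuples_conv_sum_list_take[OF Suc_le_mono[THEN iffD2, OF le_add1]]
  proof (intro CollectI conjI allI impI)
    show "length (rev a @ n # butlast c) = Suc (p + q)"
      using len_a len_c by simp
    show "sum_list (rev a @ n # butlast c) = Suc (p + q)"
      using sum_a sum_c sum_butlast \<open>k < n\<close> by simp
  next
    fix j assume j: "1 \<le> j \<and> j < Suc p"
    have "p - j < sum_list (take (p - j) a) + k"
      using height_a j by simp
    then show "sum_list (take j (rev a @ n # butlast c)) < j"
      using sum_list_take_rev[of j a] j len_a sum_a by simp
  next
    fix j assume j: "Suc p \<le> j \<and> j < Suc (p + q)"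
    define t where "t = j - Suc p"
    have t: "j = Suc p + t" "t < q"
      using j by (auto simp: t_def)
    then have "t < sum_list (take t (butlast c)) + (n - k)"
      using height_c take_butlast by simp
    then show "j \<le> sum_list (take j (rev a @ n # butlast c))"
      using t len_a sum_a \<open>k < n\<close> by simp
  qed
qed

text \<open>Block \<open>(k, n, a, c)\<close> stands for the tuple \<open>rev a @ n # butlast c\<close>; the last entry of
  \<open>c\<close> is always \<open>0\<close> (\<open>lukasiewicz_path_last\<close>).\<close>
definition C_tuple_blocks :: "nat \<Rightarrow> nat \<Rightarrow> (nat \<times> nat \<times> nat list \<times> nat list) set" where
  "C_tuple_blocks p q = (SIGMA k:{0..p}. SIGMA n:{k+1..Suc (p + q)}.
     lukasiewicz_paths p k \<times> lukasiewicz_paths (Suc q) (n - k))"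

lemma bij_betw_C_tuple_blocks:
  "bij_betw (\<lambda>(k, n, a, c). rev a @ n # butlast c) (C_tuple_blocks p q) (C_tuples (Suc p) (Suc (p + q)))"
proof -
  let ?i = "\<lambda>(k, n, a, c). rev a @ n # butlast c"
  let ?j = "\<lambda>ns. (p - sum_list (take p ns), ns ! p, rev (take p ns), drop (Suc p) ns @ [0])"
  show ?thesis
  proof (rule bij_betw_byWitness[where f' = ?j])
    show "\<forall>b\<in>C_tuple_blocks p q. ?j (?i b) = b"
    proof
      fix b assume "b \<in> C_tuple_blocks p q"
      then obtain k n a c where b: "b = (k, n, a, c)" and "k < n"
        and a: "a \<in> lukasiewicz_paths p k" and c: "c \<in> lukasiewicz_paths (Suc q) (n - k)"
        by (auto simp: C_tuple_blocks_def)
      have "length a = p" and "sum_list a + k = p"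
        using a by (auto simp: lukasiewicz_paths_def)
      moreover have "butlast c @ [0] = c"
        using lukasiewicz_path_last[OF c] \<open>k < n\<close> by simp
      ultimately show "?j (?i b) = b"
        by (auto simp: b nth_append)
    qed
    show "\<forall>ns\<in>C_tuples (Suc p) (Suc (p + q)). ?i (?j ns) = ns"
      by (auto simp: C_tuples_def id_take_nth_drop[symmetric])
    show "?i ` C_tuple_blocks p q \<subseteq> C_tuples (Suc p) (Suc (p + q))"
      using C_tuples_join by (fastforce simp: C_tuple_blocks_def Suc_le_eq)
    show "?j ` C_tuples (Suc p) (Suc (p + q)) \<subseteq> C_tuple_blocks p q"
      using C_tuples_split by (fastforce simp: C_tuple_blocks_def)
  qed
qed

lemma sum_bernoulli_weight_C_tuples:
  "(\<Sum>ns\<in>C_tuples (Suc p) (Suc (p + q)). bernoulli_weight ns) =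
   (\<Sum>k=0..p. \<Sum>n=k+1..Suc (p + q). bernoulli_fps $ n *
      ((\<Sum>a\<in>lukasiewicz_paths p k. bernoulli_weight a) *
       (\<Sum>c\<in>lukasiewicz_paths (Suc q) (n - k). bernoulli_weight c)))"
proof -
  let ?r = "Suc (p + q)"
  have weight: "bernoulli_weight (rev a @ n # butlast c) = bernoulli_fps $ n * bernoulli_weight a * bernoulli_weight c"
    if "(k, n, a, c) \<in> C_tuple_blocks p q" for k n a c
  proof -
    from that have "c = butlast c @ [0]"
      by (intro lukasiewicz_path_last[of _ q "n - k"]) (auto simp: C_tuple_blocks_def)
    then have "bernoulli_weight c = bernoulli_weight (butlast c)"
      by (metis bernoulli_weight_append bernoulli_weight_Cons bernoulli_weight_Nil bernoulli_fps_nth_0 mult_1_right)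
    then show ?thesis
      by simp
  qed
  have "(\<Sum>ns\<in>C_tuples (Suc p) ?r. bernoulli_weight ns) =
        (\<Sum>(k, n, a, c)\<in>C_tuple_blocks p q. bernoulli_fps $ n * bernoulli_weight a * bernoulli_weight c)"
    using sum.reindex_bij_betw[OF bij_betw_C_tuple_blocks, of bernoulli_weight, symmetric] weight
    by (auto intro!: sum.cong)
  also have "\<dots> = (\<Sum>k=0..p. \<Sum>(n, a, c)\<in>(SIGMA n:{k+1..?r}.
      lukasiewicz_paths p k \<times> lukasiewicz_paths (Suc q) (n - k)).
      bernoulli_fps $ n * bernoulli_weight a * bernoulli_weight c)"
    unfolding C_tuple_blocks_def by (subst sum.Sigma) (auto simp: finite_lukasiewicz_paths split_def)
  also have "\<dots> = (\<Sum>k=0..p. \<Sum>n=k+1..?r. \<Sum>(a, c)\<in>lukasiewicz_paths p k \<times> lukasiewicz_paths (Suc q) (n - k).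
      bernoulli_fps $ n * bernoulli_weight a * bernoulli_weight c)"
    by (intro sum.cong refl, subst sum.Sigma) (auto simp: finite_lukasiewicz_paths split_def)
  also have "\<dots> = (\<Sum>k=0..p. \<Sum>n=k+1..?r. bernoulli_fps $ n *
      ((\<Sum>a\<in>lukasiewicz_paths p k. bernoulli_weight a) *
       (\<Sum>c\<in>lukasiewicz_paths (Suc q) (n - k). bernoulli_weight c)))"
    by (intro sum.cong refl)
      (simp only: sum_product, simp only: sum.cartesian_product[symmetric] sum_distrib_left mult.assoc)
  finally show ?thesis .
qed

lemma bernoulli_weight_conv_prod_nth:
  "bernoulli_weight ns = (\<Prod>j=1..length ns. bernoulli (ns ! (j - 1)) / fact (ns ! (j - 1)))"
proof -
  have "bernoulli_weight ns = (\<Prod>j<length ns. bernoulli_fps $ (ns ! j))"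
    by (induction ns) (simp_all add: prod.lessThan_Suc_shift del: prod.lessThan_Suc)
  then show ?thesis
    by (simp add: bernoulli_def prod.atLeast1_atMost_eq)
qed

lemma C_coeff_eq:
  "C_coeff (Suc p) (Suc (p + q)) =
     (\<Sum>k=0..p. \<Sum>j=1..Suc q.
        bernoulli_fps $ (k + j) * (neg_log1p_fps ^ k) $ p * (neg_log1p_fps ^ j) $ Suc q)"
proof -
  let ?r = "Suc (p + q)" and ?A = "\<lambda>m k. (neg_log1p_fps ^ k) $ m"
  have "C_coeff (Suc p) ?r = (-1) ^ ?r * (\<Sum>ns\<in>C_tuples (Suc p) ?r. bernoulli_weight ns)"
    unfolding C_coeff_def by (intro arg_cong[where f = "(*) _"] sum.cong refl)
      (simp add: bernoulli_weight_conv_prod_nth C_tuples_def)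
  also have "\<dots> = (\<Sum>k=0..p. \<Sum>n=k+1..?r. bernoulli_fps $ n * ?A p k * ?A (Suc q) (n - k))"
  proof -
    have "(-1) ^ ?r * (b * ((-1) ^ p * x * ((-1) ^ Suc q * y))) = b * x * y" for b x y :: rat
    proof -
      have "(-1) ^ ?r * (b * ((-1) ^ p * x * ((-1) ^ Suc q * y))) =
            ((-1::rat) ^ (?r + (p + Suc q))) * (b * x * y)"
        by (simp only: power_add mult_ac)
      then show ?thesis
        by simp
    qed
    then show ?thesis
      by (simp only: sum_bernoulli_weight_C_tuples sum_bernoulli_weight_lukasiewicz_paths
          sum_distrib_left)
  qed
  also have "\<dots> = (\<Sum>k=0..p. \<Sum>j=1..Suc q. bernoulli_fps $ (k + j) * ?A p k * ?A (Suc q) j)"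
  proof (rule sum.cong[OF refl])
    fix k assume "k \<in> {0..p}"
    have "(\<Sum>n=k+1..?r. bernoulli_fps $ n * ?A p k * ?A (Suc q) (n - k)) =
          (\<Sum>j=1..?r-k. bernoulli_fps $ (k + j) * ?A p k * ?A (Suc q) j)"
      by (intro sum.reindex_bij_witness[where i = "\<lambda>j. k + j" and j = "\<lambda>n. n - k"]) auto
    also have "\<dots> = (\<Sum>j=1..Suc q. bernoulli_fps $ (k + j) * ?A p k * ?A (Suc q) j)"
      using \<open>k \<in> {0..p}\<close> by (intro sum.mono_neutral_right) (auto simp: fps_power_nth_eq_0)
    finally show "(\<Sum>n=k+1..?r. bernoulli_fps $ n * ?A p k * ?A (Suc q) (n - k)) =
        (\<Sum>j=1..Suc q. bernoulli_fps $ (k + j) * ?A p k * ?A (Suc q) j)" .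
  qed
  finally show ?thesis .
qed

section \<open>The Gregory series\<close>

lemma fps_const_sum: "fps_const (sum f S) = (\<Sum>i\<in>S. fps_const (f i) :: 'a::comm_monoid_add fps)"
  by (induction S rule: infinite_finite_induct) (simp_all flip: fps_const_add)

text \<open>\<open>f(y)\<close>: the series \<open>f\<close> in the outer variable, see \<open>bvLy\<close>.\<close>
definition lift_fps :: "'a::comm_ring_1 fps \<Rightarrow> 'a fps fps" where
  "lift_fps f = Abs_fps (\<lambda>n. fps_const (f $ n))"

lemma lift_fps_nth [simp]: "lift_fps f $ n = fps_const (f $ n)"
  by (simp add: lift_fps_def)

lemma lift_fps_uminus [simp]: "lift_fps (- f) = - lift_fps f"
  and lift_fps_X [simp]: "lift_fps fps_X = fps_X"
  and lift_fps_one [simp]: "lift_fps 1 = 1"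
  by (simp_all add: fps_eq_iff)

lemma lift_fps_mult [simp]: "lift_fps (f * g) = lift_fps f * lift_fps g"
  by (simp add: fps_eq_iff fps_mult_nth fps_const_sum)

lemma lift_fps_power [simp]: "lift_fps (f ^ n) = lift_fps f ^ n"
  by (induction n) simp_all

lemma lift_fps_compose: "lift_fps f oo lift_fps g = lift_fps (f oo g)"
  by (simp add: fps_eq_iff fps_compose_nth fps_const_sum flip: lift_fps_power)

text \<open>\<open>z (f(z) - f(a)) / (z - a)\<close> in the outer variable \<open>z\<close>: the coefficient of \<open>z^j\<close>
  (\<open>j \<ge> 1\<close>) is \<open>\<Sum>_t f_{t+j} a^t\<close>.\<close>
definition fps_diff_quotient :: "'a::idom fps \<Rightarrow> 'a fps \<Rightarrow> 'a fps fps" where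
  "fps_diff_quotient f a = Abs_fps (\<lambda>j. if j = 0 then 0 else fps_shift j f oo a)"

lemma fps_shift_conv_Suc:
  fixes f :: "'a::comm_ring_1 fps"
  shows "fps_shift j f = fps_const (f $ j) + fps_X * fps_shift (Suc j) f"
  by (auto simp: fps_eq_iff)

lemma fps_diff_quotient_times:
  assumes "a $ 0 = 0"
  shows "(fps_X - fps_const a) * fps_diff_quotient f a = fps_X * (lift_fps f - fps_const (f oo a))"
proof (rule fps_ext)
  let ?Q = "\<lambda>j. fps_shift j f oo a"
  have Q: "?Q j = fps_const (f $ j) + a * ?Q (Suc j)" for j
    by (subst fps_shift_conv_Suc) (simp add: fps_compose_add_distrib fps_compose_mult_distrib assms)
  fix n
  show "((fps_X - fps_const a) * fps_diff_quotient f a) $ n =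
        (fps_X * (lift_fps f - fps_const (f oo a))) $ n"
  proof (cases n)
    case (Suc j)
    then show ?thesis
      using Q[of j] by (cases j) (simp_all add: fps_diff_quotient_def algebra_simps)
  qed (simp add: fps_diff_quotient_def)
qed

lemma bvLx_eq: "bvLx = - fps_const neg_log1p_fps"
  by (simp add: bvLx_def neg_log1p_fps_def)

lemma bvLy_eq: "bvLy = - lift_fps neg_log1p_fps"
  by (simp add: bvLy_def neg_log1p_fps_def fps_eq_iff)

lemma gregory_fps_eqI:
  assumes "(bvLx - bvLy) * g = bvY * bvLx ^ 2 - bvX * bvLy ^ 2"
  shows "gregory_fps = g"
proof -
  have "bvLx - bvLy \<noteq> 0"
  proof
    assume "bvLx - bvLy = 0"
    then have "((bvLx - bvLy) $ 0) $ 1 = 0"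
      by simp
    then show False
      by (simp add: bvLx_def bvLy_def log1p_fps_def)
  qed
  then have "h = g" if "(bvLx - bvLy) * h = bvY * bvLx ^ 2 - bvX * bvLy ^ 2" for h
    using that assms mult_left_cancel by metis
  with assms show ?thesis
    unfolding gregory_fps_def by (intro the_equality)
qed

lemma gregory_fps_eq:
  "gregory_fps = bvY * bvLx + bvX * bvY *
     (fps_diff_quotient bernoulli_fps neg_log1p_fps oo lift_fps neg_log1p_fps)"
proof -
  let ?a = "fps_const neg_log1p_fps" and ?c = "lift_fps neg_log1p_fps"
  let ?\<Phi> = "fps_diff_quotient bernoulli_fps neg_log1p_fps"
  let ?b = "bernoulli_fps oo neg_log1p_fps"
  let ?g = "bvY * bvLx + bvX * bvY * (?\<Phi> oo ?c)"
  have c0: "?c $ 0 = 0"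
    by simp
  have "((fps_X - ?a) * ?\<Phi>) oo ?c = (fps_X * (lift_fps bernoulli_fps - fps_const ?b)) oo ?c"
    by (simp add: fps_diff_quotient_times)
  then have \<Phi>: "(?c - ?a) * (?\<Phi> oo ?c) = ?c * (lift_fps ?b - fps_const ?b)"
    by (simp add: fps_compose_mult_distrib[OF c0] fps_compose_sub_distrib lift_fps_compose)
  have y_b: "bvY * lift_fps ?b = - ?c"
    using arg_cong[OF bernoulli_fps_compose_neg_log1p, of lift_fps] by (simp add: bvY_def)
  have x_b: "bvX * fps_const ?b = - ?a"
    using arg_cong[OF bernoulli_fps_compose_neg_log1p, of fps_const] by (simp add: bvX_def)
  have "(bvLx - bvLy) * (bvX * bvY * (?\<Phi> oo ?c)) = bvX * bvY * ((?c - ?a) * (?\<Phi> oo ?c))"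
    by (simp add: bvLx_eq bvLy_eq algebra_simps del: fps_const_neg)
  also have "\<dots> = bvX * ?c * (bvY * lift_fps ?b) - bvY * ?c * (bvX * fps_const ?b)"
    unfolding \<Phi> by (simp add: algebra_simps)
  also have "\<dots> = bvY * ?c * ?a - bvX * ?c * ?c"
    unfolding y_b x_b by (simp del: fps_const_neg)
  finally have quotient_part: "(bvLx - bvLy) * (bvX * bvY * (?\<Phi> oo ?c)) = bvY * ?c * ?a - bvX * ?c * ?c" .
  have "(bvLx - bvLy) * ?g = (?c - ?a) * bvY * (- ?a) + (bvLx - bvLy) * (bvX * bvY * (?\<Phi> oo ?c))"
    by (simp add: bvLx_eq bvLy_eq algebra_simps del: fps_const_neg)
  also have "\<dots> = bvY * bvLx ^ 2 - bvX * bvLy ^ 2"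
    unfolding quotient_part by (simp add: bvLx_eq bvLy_eq algebra_simps power2_eq_square del: fps_const_neg)
  finally have "(bvLx - bvLy) * ?g = bvY * bvLx ^ 2 - bvX * bvLy ^ 2" .
  then show ?thesis
    by (rule gregory_fps_eqI)
qed

lemma G_eq:
  "G (Suc p) (Suc (Suc q)) =
     (\<Sum>j=1..Suc q. (\<Sum>t=0..p. bernoulli_fps $ (t + j) * (neg_log1p_fps ^ t) $ p) *
        (neg_log1p_fps ^ j) $ Suc q)"
proof -
  let ?\<Phi> = "fps_diff_quotient bernoulli_fps neg_log1p_fps"
  have "gregory_fps $ Suc (Suc q) = fps_X * ((?\<Phi> oo lift_fps neg_log1p_fps) $ Suc q)"
    by (simp add: gregory_fps_eq bvX_def bvY_def bvLx_def mult.assoc)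
  then have "G (Suc p) (Suc (Suc q)) = ((?\<Phi> oo lift_fps neg_log1p_fps) $ Suc q) $ p"
    by (simp add: G_def)
  also have "\<dots> = (\<Sum>j=0..Suc q. (?\<Phi> $ j) $ p * (neg_log1p_fps ^ j) $ Suc q)"
    by (simp add: fps_compose_nth fps_sum_nth flip: lift_fps_power)
  also have "\<dots> = (\<Sum>j=1..Suc q. (\<Sum>t=0..p. bernoulli_fps $ (t + j) * (neg_log1p_fps ^ t) $ p) *
        (neg_log1p_fps ^ j) $ Suc q)"
    by (simp add: sum.atLeast_Suc_atMost fps_diff_quotient_def fps_compose_nth)
  finally show ?thesis .
qed

theorem theorem4p2:
  fixes i r :: nat
  assumes "1 \<le> i" and "i \<le> r"
  shows "C_coeff i r = G i (r - i + 2)"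
proof -
  obtain p q where i: "i = Suc p" and r: "r = Suc (p + q)"
    using assms by (metis Suc_le_D add_Suc le_Suc_ex One_nat_def)
  have r_i: "r - i + 2 = Suc (Suc q)"
    using i r by simp
  have "C_coeff i r =
      (\<Sum>j=1..Suc q. \<Sum>t=0..p.
         bernoulli_fps $ (t + j) * (neg_log1p_fps ^ t) $ p * (neg_log1p_fps ^ j) $ Suc q)"
    unfolding i r C_coeff_eq by (rule sum.swap)
  also have "\<dots> = G i (r - i + 2)"
    unfolding r_i unfolding i G_eq by (simp only: sum_distrib_right)
  finally show ?thesis .
qed

end
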